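(* Let $p>2$ be a prime and $n$ a natural number with $n+1<p$. Let $(A,+,\circ)$ be a left brace of cardinality $p^{n}$ which is strongly nilpotent of nilpotency index $k<p$, and suppose the group $(A,\circ)$ is powerful. Let $\gamma$ be a primitive root modulo $p^{p}$, $\xi=\gamma^{p^{p-1}}$, and define $a\cdot b=\sum_{i=0}^{p-2}\xi^{p-1-i}\big((\xi^{i}a)*b\big)$ for $a,b\in A$. Then the pre-Lie ring $(A,+,\cdot)$ is powerful, i.e. $a\cdot b-b\cdot a\in pA$ for all $a,b\in A$.
   Context: A (left) brace is a set $A$ with operations $+,\circ$ such that $(A,+)$ is an abelian group, $(A,\circ)$ is a group, and $a\circ(b+c)+a=a\circ b+a\circ c$; $a*b=a\circ b-a-b$. $A$ is strongly nilpotent of index $k$ if $A^{[k]}=0\ne A^{[k-1]}$, where $A^{[1]}=A$ and $A^{[i]}$ is the additive span of $a*b$ with $a\in A^{[j]}$, $b\in A^{[i-j]}$, $0<j<i$. Under these hypotheses $(A,+,\cdot)$ is a pre-Lie ring. A finite $p$-group $G$ ($p>2$) is powerful if $G'\le G^{p}=\langle g^{p}\rangle$. *)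

theory Defs
  imports "HOL-Number_Theory.Residue_Primitive_Roots" "HOL-Algebra.Generated_Groups"
begin

text \<open>In a brace the neutral element of (A, circ) is necessarily the additive zero
  (put b = c = 0 in the brace identity), so we use 0 as the unit.\<close>
definition circ_group :: "('a::ab_group_add \<Rightarrow> 'a \<Rightarrow> 'a) \<Rightarrow> 'a monoid" where
  "circ_group circ = \<lparr>carrier = UNIV, monoid.mult = circ, one = 0\<rparr>"

definition left_brace :: "('a::ab_group_add \<Rightarrow> 'a \<Rightarrow> 'a) \<Rightarrow> bool" where
  "left_brace circ \<longleftrightarrow> group (circ_group circ) \<and>
     (\<forall>a b c. circ a (b + c) + a = circ a b + circ a c)"

definition bstar :: "('a::ab_group_add \<Rightarrow> 'a \<Rightarrow> 'a) \<Rightarrow> 'a \<Rightarrow> 'a \<Rightarrow> 'a" where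
  "bstar circ a b = circ a b - a - b"

inductive in_bpow :: "('a::ab_group_add \<Rightarrow> 'a \<Rightarrow> 'a) \<Rightarrow> nat \<Rightarrow> 'a \<Rightarrow> bool"
  for circ where
  one: "in_bpow circ (Suc 0) a"
| star: "0 < j \<Longrightarrow> j < i \<Longrightarrow> in_bpow circ j a \<Longrightarrow> in_bpow circ (i - j) b
          \<Longrightarrow> in_bpow circ i (bstar circ a b)"
| zero: "0 < i \<Longrightarrow> in_bpow circ i 0"
| add: "in_bpow circ i a \<Longrightarrow> in_bpow circ i b \<Longrightarrow> in_bpow circ i (a + b)"
| neg: "in_bpow circ i a \<Longrightarrow> in_bpow circ i (- a)"

definition bpow :: "('a::ab_group_add \<Rightarrow> 'a \<Rightarrow> 'a) \<Rightarrow> nat \<Rightarrow> 'a set" where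
  "bpow circ i = {a. in_bpow circ i a}"

definition strongly_nilpotent_index :: "('a::ab_group_add \<Rightarrow> 'a \<Rightarrow> 'a) \<Rightarrow> nat \<Rightarrow> bool" where
  "strongly_nilpotent_index circ k \<longleftrightarrow> bpow circ k = {0} \<and> bpow circ (k - 1) \<noteq> {0}"

definition nsmul :: "nat \<Rightarrow> 'a::ab_group_add \<Rightarrow> 'a" where
  "nsmul m a = (\<Sum>_<m. a)"

definition powerful_group :: "'a monoid \<Rightarrow> nat \<Rightarrow> bool" where
  "powerful_group G p \<longleftrightarrow>
     derived G (carrier G) \<subseteq> generate G {x [^]\<^bsub>G\<^esub> p | x. x \<in> carrier G}"

definition dot :: "('a::ab_group_add \<Rightarrow> 'a \<Rightarrow> 'a) \<Rightarrow> nat \<Rightarrow> nat \<Rightarrow> 'a \<Rightarrow> 'a \<Rightarrow> 'a" where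
  "dot circ p xi a b = (\<Sum>i = 0..p - 2. nsmul (xi ^ (p - 1 - i)) (bstar circ (nsmul (xi ^ i) a) b))"

end

theory Submission
  imports Defs
begin

text \<open>Write \<open>\<lambda>\<^sub>a(b) = a \<circ> b - a\<close>; in a brace \<open>\<lambda>\<^sub>a\<close> is additive and \<open>a \<mapsto> \<lambda>\<^sub>a\<close> is a
  homomorphism from \<open>(A, \<circ>)\<close>, so \<open>pA\<close> is a subgroup of \<open>(A, \<circ>)\<close>. Expanding the powers of
  \<open>x\<close> with respect to \<open>\<circ>\<close> gives \<open>x\<^sup>p = \<Sum>\<^sub>j (p choose j+1) x\<^sup>*\<^sup>j\<close> with \<open>x\<^sup>*\<^sup>j = x * (\<dots> * x)\<close>;
  the iterated products with \<open>j \<ge> k - 1\<close> lie in \<open>A\<^sup>[\<^sup>k\<^sup>] = 0\<close> and the remaining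
  binomial coefficients are divisible by \<open>p\<close>, so all \<open>p\<close>-th powers lie in \<open>pA\<close>.
  Powerfulness then puts every commutator of \<open>(A, \<circ>)\<close> into \<open>pA\<close>, which forces
  \<open>a * b \<equiv> b * a\<close> modulo \<open>pA\<close>; the claim for \<open>\<cdot>\<close> follows because \<open>*\<close> is additive in its
  right argument. Neither the choice of \<open>\<xi>\<close> nor the order of \<open>A\<close> plays a role.\<close>

lemma nsmul_0 [simp]: "nsmul 0 a = 0"
  by (simp add: nsmul_def)

lemma nsmul_Suc: "nsmul (Suc m) a = a + nsmul m a"
  by (simp add: nsmul_def add.commute)

lemma nsmul_add_left: "nsmul (m + n) a = nsmul m a + nsmul n a"
  by (induction m) (simp_all add: nsmul_Suc add.assoc)

lemma nsmul_mult: "nsmul (m * n) a = nsmul m (nsmul n a)"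
  by (induction m) (simp_all add: nsmul_Suc nsmul_add_left)

lemma additive_nsmul: "additive (nsmul m)"
  by unfold_locales (simp add: nsmul_def sum.distrib)

lemma (in additive) nsmul: "f (nsmul m x) = nsmul m (f x)"
  by (induction m) (simp_all add: nsmul_Suc add zero)

lemma zero_in_range_nsmul: "0 \<in> range (nsmul m)"
  by (metis additive.zero[OF additive_nsmul] rangeI)

lemma range_nsmul_add:
  "a \<in> range (nsmul m) \<Longrightarrow> b \<in> range (nsmul m) \<Longrightarrow> a + b \<in> range (nsmul m)"
  by (auto simp flip: additive.add[OF additive_nsmul])

lemma range_nsmul_diff:
  "a \<in> range (nsmul m) \<Longrightarrow> b \<in> range (nsmul m) \<Longrightarrow> a - b \<in> range (nsmul m)"
  by (auto simp flip: additive.diff[OF additive_nsmul])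

lemma range_nsmul_nsmul: "a \<in> range (nsmul m) \<Longrightarrow> nsmul l a \<in> range (nsmul m)"
  by (metis mult.commute nsmul_mult rangeE rangeI)

lemma range_nsmul_sum:
  assumes "\<And>i. i \<in> I \<Longrightarrow> g i \<in> range (nsmul m)"
  shows "sum g I \<in> range (nsmul m)"
proof -
  have "\<forall>i\<in>I. \<exists>w. g i = nsmul m w"
    using assms by blast
  then obtain w where "\<And>i. i \<in> I \<Longrightarrow> g i = nsmul m (w i)"
    by metis
  then have "sum g I = nsmul m (sum w I)"
    by (simp add: additive.sum[OF additive_nsmul])
  then show ?thesis by simp
qed

lemma (in additive) image_range_nsmul: "a \<in> range (nsmul m) \<Longrightarrow> f a \<in> range (nsmul m)"
  by (auto simp: nsmul)

lemma iterated_bstar_in_bpow: "in_bpow circ (Suc j) ((bstar circ x ^^ j) x)"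
proof (induction j)
  case 0
  then show ?case by (simp add: in_bpow.one)
next
  case (Suc j)
  then show ?case
    using in_bpow.star[of 1 "Suc (Suc j)" circ x] in_bpow.one[of circ x] by simp
qed

lemma in_bpow_index_pos: "in_bpow circ i a \<Longrightarrow> 0 < i"
  by (induction rule: in_bpow.induct) auto

lemma strongly_nilpotent_index_pos: "strongly_nilpotent_index circ k \<Longrightarrow> 0 < k"
proof -
  have "\<not> in_bpow circ 0 a" for a
    by (rule notI, drule in_bpow_index_pos) simp
  then show "strongly_nilpotent_index circ k \<Longrightarrow> 0 < k"
    by (auto simp: strongly_nilpotent_index_def bpow_def)
qed

lemma derived_subset_if_powers_in:
  fixes G :: "'a monoid"
  assumes "group G" and "powerful_group G p" and "subgroup H G"
    and "\<And>x. x \<in> carrier G \<Longrightarrow> x [^]\<^bsub>G\<^esub> p \<in> H"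
  shows "derived G (carrier G) \<subseteq> H"
proof -
  have "generate G {x [^]\<^bsub>G\<^esub> p | x. x \<in> carrier G} \<subseteq> H"
    using assms(3,4) by (intro group.generate_subgroup_incl[OF assms(1)]) auto
  then show ?thesis
    using assms(2) unfolding powerful_group_def by blast
qed

locale brace =
  fixes circ :: "'a::ab_group_add \<Rightarrow> 'a \<Rightarrow> 'a"
  assumes left_brace: "left_brace circ"
begin

sublocale G: group "circ_group circ"
  using left_brace unfolding left_brace_def by blast

lemma circ_group_simps [simp]:
  "monoid.mult (circ_group circ) = circ" "one (circ_group circ) = 0"
  "carrier (circ_group circ) = UNIV"
  by (simp_all add: circ_group_def)

lemma circ_assoc: "circ (circ a b) c = circ a (circ b c)"
  using G.m_assoc by simp

lemma circ_0_left: "circ 0 a = a"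
  using G.l_one by simp

definition lam :: "'a \<Rightarrow> 'a \<Rightarrow> 'a" where
  "lam a b = circ a b - a"

lemma circ_eq_add_lam: "circ a b = a + lam a b"
  by (simp add: lam_def)

lemma additive_lam: "additive (lam a)"
proof
  show "lam a (b + c) = lam a b + lam a c" for b c
    using left_brace unfolding left_brace_def lam_def by (simp add: algebra_simps)
qed

lemma lam_circ: "lam (circ a b) c = lam a (lam b c)"
proof -
  have "lam a (lam b c) + lam a b = lam a (circ b c)"
    using additive.add[OF additive_lam, of a "lam b c" b] by (simp add: lam_def)
  then show ?thesis
    by (simp add: lam_def circ_assoc algebra_simps)
qed

lemma inv_eq_neg_lam: "inv\<^bsub>circ_group circ\<^esub> a = - lam (inv\<^bsub>circ_group circ\<^esub> a) a"
proof -
  let ?a' = "inv\<^bsub>circ_group circ\<^esub> a"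
  have "?a' = lam (circ ?a' a) ?a'"
    using G.l_inv by (simp add: lam_def circ_0_left)
  also have "\<dots> = lam ?a' (lam a ?a')"
    by (rule lam_circ)
  also have "lam a ?a' = - a"
    using G.r_inv by (simp add: lam_def)
  finally show ?thesis
    by (metis additive.minus[OF additive_lam])
qed

lemma bstar_eq_lam: "bstar circ a b = lam a b - b"
  by (simp add: bstar_def lam_def)

lemma additive_bstar: "additive (bstar circ a)"
  by unfold_locales (simp add: bstar_eq_lam additive.add[OF additive_lam])

lemma subgroup_range_nsmul: "subgroup (range (nsmul m)) (circ_group circ)"
proof (rule G.subgroupI)
  show "range (nsmul m) \<noteq> {}" by blast
next
  fix a :: 'a assume "a \<in> range (nsmul m)"
  then have "lam (inv\<^bsub>circ_group circ\<^esub> a) a \<in> range (nsmul m)"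
    by (rule additive.image_range_nsmul[OF additive_lam])
  then show "inv\<^bsub>circ_group circ\<^esub> a \<in> range (nsmul m)"
    by (subst inv_eq_neg_lam) (metis diff_0 range_nsmul_diff zero_in_range_nsmul)
next
  fix a b :: 'a assume "a \<in> range (nsmul m)" "b \<in> range (nsmul m)"
  then show "a \<otimes>\<^bsub>circ_group circ\<^esub> b \<in> range (nsmul m)"
    by (simp add: circ_eq_add_lam range_nsmul_add additive.image_range_nsmul[OF additive_lam])
qed auto

lemma iterated_bstar_eq_0:
  assumes "strongly_nilpotent_index circ k" and "k - 1 \<le> j"
  shows "(bstar circ x ^^ j) x = 0"
proof -
  have "in_bpow circ k ((bstar circ x ^^ (k - 1)) x)"
    using iterated_bstar_in_bpow[of circ "k - 1" x] strongly_nilpotent_index_pos[OF assms(1)]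
    by simp
  then have "(bstar circ x ^^ (k - 1)) x = 0"
    using assms(1) unfolding strongly_nilpotent_index_def bpow_def by auto
  moreover have "(bstar circ x ^^ i) 0 = 0" for i
    by (induction i) (simp_all add: additive.zero[OF additive_bstar])
  moreover have "(bstar circ x ^^ j) x = (bstar circ x ^^ (j - (k - 1))) ((bstar circ x ^^ (k - 1)) x)"
    using assms(2) by (metis funpow_add le_add_diff_inverse2 o_apply)
  ultimately show ?thesis by simp
qed

lemma circ_pow_eq_sum:
  "x [^]\<^bsub>circ_group circ\<^esub> m = (\<Sum>j<m. nsmul (m choose Suc j) ((bstar circ x ^^ j) x))"
proof (induction m)
  case 0
  then show ?case by simp
next
  case (Suc m)
  define y where "y j = (bstar circ x ^^ j) x" for j
  define S where "S = (\<Sum>j<m. nsmul (m choose Suc j) (y j))"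
  have "x [^]\<^bsub>circ_group circ\<^esub> Suc m = circ x S"
    using G.nat_pow_Suc2[of x m] Suc by (simp add: S_def y_def)
  also have "\<dots> = x + S + bstar circ x S"
    by (simp add: bstar_def)
  also have "bstar circ x S = (\<Sum>j<m. nsmul (m choose Suc j) (y (Suc j)))"
    by (simp add: S_def y_def additive.sum[OF additive_bstar] additive.nsmul[OF additive_bstar])
  finally have "x [^]\<^bsub>circ_group circ\<^esub> Suc m
      = S + (x + (\<Sum>j<m. nsmul (m choose Suc j) (y (Suc j))))"
    by (simp add: algebra_simps)
  also have "x + (\<Sum>j<m. nsmul (m choose Suc j) (y (Suc j))) = (\<Sum>j<Suc m. nsmul (m choose j) (y j))"
    by (subst sum.lessThan_Suc_shift) (simp add: nsmul_Suc y_def)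
  also have "S = (\<Sum>j<Suc m. nsmul (m choose Suc j) (y j))"
    by (simp add: S_def binomial_eq_0)
  also have "\<dots> + (\<Sum>j<Suc m. nsmul (m choose j) (y j))
      = (\<Sum>j<Suc m. nsmul (Suc m choose Suc j) (y j))"
    by (simp add: nsmul_add_left sum.distrib add.commute)
  finally show ?case by (simp add: y_def)
qed

lemma circ_pow_prime_in_range_nsmul:
  assumes "prime p" and "strongly_nilpotent_index circ k" and "k \<le> p"
  shows "x [^]\<^bsub>circ_group circ\<^esub> p \<in> range (nsmul p)"
  unfolding circ_pow_eq_sum
proof (rule range_nsmul_sum)
  fix j assume "j \<in> {..<p}"
  show "nsmul (p choose Suc j) ((bstar circ x ^^ j) x) \<in> range (nsmul p)"
  proof (cases "k - 1 \<le> j")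
    case True
    then show ?thesis
      by (simp add: iterated_bstar_eq_0[OF assms(2)] additive.zero[OF additive_nsmul]
          zero_in_range_nsmul)
  next
    case False
    then have "p dvd (p choose Suc j)"
      using assms by (intro dvd_choose_prime) auto
    then show ?thesis
      by (metis dvdE nsmul_mult rangeI)
  qed
qed

lemma circ_commute_mod:
  assumes "derived (circ_group circ) UNIV \<subseteq> range (nsmul m)"
  shows "circ x y - circ y x \<in> range (nsmul m)"
proof -
  let ?inv = "m_inv (circ_group circ)"
  \<comment> \<open>\<open>c\<close> is a commutator with \<open>(y \<circ> x) \<circ> c = x \<circ> y\<close>, so \<open>x \<circ> y - y \<circ> x = \<lambda>\<^sub>y\<^sub>\<circ>\<^sub>x(c)\<close>.\<close>
  define c where "c = circ (circ (circ (?inv x) (?inv y)) x) y"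
  have "c \<in> derived_set (circ_group circ) UNIV"
    by (intro UN_I[of "?inv x"] UN_I[of "?inv y"]) (simp_all add: c_def)
  then have "c \<in> range (nsmul m)"
    using assms unfolding derived_def by (blast intro: generate.incl)
  moreover have "circ (circ y x) c = circ x y"
    using G.r_inv by (simp add: c_def circ_assoc, simp add: circ_assoc[symmetric] circ_0_left)
  then have "circ x y - circ y x = lam (circ y x) c"
    by (simp add: lam_def)
  ultimately show ?thesis
    by (simp add: additive.image_range_nsmul[OF additive_lam])
qed

lemma bstar_commute_mod:
  assumes "derived (circ_group circ) UNIV \<subseteq> range (nsmul m)"
  shows "bstar circ x y - bstar circ y x \<in> range (nsmul m)"
  using circ_commute_mod[OF assms] by (simp add: bstar_def)

lemma dot_commute_mod:
  assumes "\<And>x y. bstar circ x y - bstar circ y x \<in> range (nsmul m)"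
  shows "dot circ q \<xi> a b - dot circ q \<xi> b a \<in> range (nsmul m)"
proof -
  have split_swap: "bstar circ (nsmul l a) b - bstar circ (nsmul l b) a
      = (bstar circ (nsmul l a) b - bstar circ b (nsmul l a)) + nsmul l (bstar circ b a - bstar circ a b)
        + (bstar circ a (nsmul l b) - bstar circ (nsmul l b) a)" for l
    by (simp add: additive.nsmul[OF additive_bstar] additive.diff[OF additive_nsmul])
  have "dot circ q \<xi> a b - dot circ q \<xi> b a
      = (\<Sum>i = 0..q - 2. nsmul (\<xi> ^ (q - 1 - i))
           (bstar circ (nsmul (\<xi> ^ i) a) b - bstar circ (nsmul (\<xi> ^ i) b) a))"
    by (simp add: dot_def additive.diff[OF additive_nsmul] sum_subtractf)
  also have "\<dots> \<in> range (nsmul m)"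
    by (intro range_nsmul_sum range_nsmul_nsmul)
      (simp only: split_swap range_nsmul_add range_nsmul_nsmul assms)
  finally show ?thesis .
qed

end

theorem proposition2p9:
  fixes circ :: "'a::{ab_group_add, finite} \<Rightarrow> 'a \<Rightarrow> 'a"
    and p n k \<gamma> :: nat
  assumes "prime p" and "p > 2" and "n + 1 < p"
    and "left_brace circ"
    and "card (UNIV :: 'a set) = p ^ n"
    and "strongly_nilpotent_index circ k" and "k < p"
    and "powerful_group (circ_group circ) p"
    and "residue_primroot (p ^ p) \<gamma>"
  shows "\<forall>a b. dot circ p (\<gamma> ^ (p ^ (p - 1))) a b - dot circ p (\<gamma> ^ (p ^ (p - 1))) b a
           \<in> {nsmul p x | x. True}"
proof -
  interpret brace circ
    by (rule brace.intro) fact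
  have "derived (circ_group circ) UNIV \<subseteq> range (nsmul p)"
    using derived_subset_if_powers_in[OF G.group_axioms assms(8) subgroup_range_nsmul]
      circ_pow_prime_in_range_nsmul[OF assms(1,6)] assms(7)
    by simp
  then have "dot circ p \<xi> a b - dot circ p \<xi> b a \<in> range (nsmul p)" for \<xi> a b
    by (intro dot_commute_mod bstar_commute_mod)
  then show ?thesis
    by blast
qed

end
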